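(* Let $G=(V,E)$ be a directed graph without parallel edges, with integer edge capacities in $\{1,\dots,U\}$ and root $r\in V$, and let $\lambda$ be the capacity of a minimum $r$-cut. Let $k$ be the minimum number of vertices in a sink component of a minimum $r$-cut. Then either $k=1$ or $\lambda< Uk$.
   Context: For a nonempty set $T\subseteq V\setminus\{r\}$, the $r$-cut with sink component $T$ is the set of edges with head in $T$ and tail outside $T$; its capacity is the total capacity of these edges. A minimum $r$-cut is an $r$-cut of minimum capacity. *)

theory Defs
  imports Main
begin

text \<open>A directed graph without parallel edges: finite vertex set V, edge set E \<subseteq> V \<times> V.
  The r-cut with sink component T is the set of edges with head in T and tail outside T.\<close>

definition rcut :: "('a \<times> 'a) set \<Rightarrow> 'a set \<Rightarrow> ('a \<times> 'a) set" where
  "rcut E T = {(u, v) \<in> E. v \<in> T \<and> u \<notin> T}"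

definition cut_cap :: "('a \<times> 'a) set \<Rightarrow> ('a \<times> 'a \<Rightarrow> nat) \<Rightarrow> 'a set \<Rightarrow> nat" where
  "cut_cap E c T = (\<Sum>e\<in>rcut E T. c e)"

definition sink_sets :: "'a set \<Rightarrow> 'a \<Rightarrow> 'a set set" where
  "sink_sets V r = {T. T \<subseteq> V - {r} \<and> T \<noteq> {}}"

definition min_rcut_value :: "'a set \<Rightarrow> ('a \<times> 'a) set \<Rightarrow> ('a \<times> 'a \<Rightarrow> nat) \<Rightarrow> 'a \<Rightarrow> nat" where
  "min_rcut_value V E c r = Min (cut_cap E c ` sink_sets V r)"

definition is_min_rcut_sink :: "'a set \<Rightarrow> ('a \<times> 'a) set \<Rightarrow> ('a \<times> 'a \<Rightarrow> nat) \<Rightarrow> 'a \<Rightarrow> 'a set \<Rightarrow> bool" where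
  "is_min_rcut_sink V E c r T \<longleftrightarrow> T \<in> sink_sets V r \<and> cut_cap E c T = min_rcut_value V E c r"

definition min_sink_size :: "'a set \<Rightarrow> ('a \<times> 'a) set \<Rightarrow> ('a \<times> 'a \<Rightarrow> nat) \<Rightarrow> 'a \<Rightarrow> nat" where
  "min_sink_size V E c r = Min {card T | T. is_min_rcut_sink V E c r T}"

end

theory Submission
  imports Defs
begin

text \<open>Let T be a sink component of a minimum r-cut of minimum size k \<ge> 2 and let \<lambda> be the
  minimum cut value. No singleton {v} with v \<in> T is a minimum sink (it would be smaller than T),
  so each of the k singleton cuts has capacity at least \<lambda> + 1. Summing them counts the cut of T
  once plus every edge inside T, and there are at most k(k-1) such edges of capacity at most U.
  Hence k(\<lambda> + 1) \<le> \<lambda> + U k(k-1), which forces \<lambda> < U k.\<close>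

definition inner_edges :: "('a \<times> 'a) set \<Rightarrow> 'a set \<Rightarrow> ('a \<times> 'a) set" where
  "inner_edges E T = {(u, v) \<in> E. u \<in> T \<and> v \<in> T \<and> u \<noteq> v}"

lemma sum_cut_cap_singletons:
  assumes "finite E" and "finite T"
  shows "(\<Sum>v\<in>T. cut_cap E c {v}) = cut_cap E c T + (\<Sum>e\<in>inner_edges E T. c e)"
proof -
  have "(\<Sum>v\<in>T. cut_cap E c {v}) = (\<Sum>e\<in>(\<Union>v\<in>T. rcut E {v}). c e)"
    unfolding cut_cap_def
    by (rule sum.UNION_disjoint[symmetric])
      (auto simp: assms(2) rcut_def intro: finite_subset[OF _ assms(1)])
  also have "(\<Union>v\<in>T. rcut E {v}) = rcut E T \<union> inner_edges E T"
    by (auto simp: rcut_def inner_edges_def)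
  also have "(\<Sum>e\<in>rcut E T \<union> inner_edges E T. c e) = cut_cap E c T + (\<Sum>e\<in>inner_edges E T. c e)"
    unfolding cut_cap_def
    by (rule sum.union_disjoint) (auto simp: rcut_def inner_edges_def intro: finite_subset[OF _ assms(1)])
  finally show ?thesis .
qed

lemma card_inner_edges_le:
  assumes "finite T"
  shows "card (inner_edges E T) \<le> card T * (card T - 1)"
proof -
  have "inner_edges E T \<subseteq> Sigma T (\<lambda>u. T - {u})"
    by (auto simp: inner_edges_def)
  then have "card (inner_edges E T) \<le> card (Sigma T (\<lambda>u. T - {u}))"
    using assms by (intro card_mono) auto
  also have "\<dots> = card T * (card T - 1)"
    using assms by (simp add: card_SigmaI)
  finally show ?thesis .
qed

lemma sum_inner_edges_le:
  assumes "finite T" and "\<And>e. e \<in> E \<Longrightarrow> c e \<le> U"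
  shows "(\<Sum>e\<in>inner_edges E T. c e) \<le> U * (card T * (card T - 1))"
proof -
  have "(\<Sum>e\<in>inner_edges E T. c e) \<le> (\<Sum>e\<in>inner_edges E T. U)"
    using assms(2) by (intro sum_mono) (auto simp: inner_edges_def)
  also have "\<dots> \<le> U * (card T * (card T - 1))"
    using card_inner_edges_le[OF assms(1)] by simp
  finally show ?thesis .
qed

lemma finite_sink_sets: "finite V \<Longrightarrow> finite (sink_sets V r)"
  unfolding sink_sets_def by (auto intro: finite_subset[of _ "Pow V"])

lemma card_sink_pos: "finite V \<Longrightarrow> T \<in> sink_sets V r \<Longrightarrow> 0 < card T"
  unfolding sink_sets_def by (auto simp: card_gt_0_iff intro: finite_subset)

lemma min_rcut_value_le:
  "finite V \<Longrightarrow> T \<in> sink_sets V r \<Longrightarrow> min_rcut_value V E c r \<le> cut_cap E c T"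
  unfolding min_rcut_value_def by (simp add: finite_sink_sets)

lemma ex_min_rcut_sink:
  assumes "finite V" and "V - {r} \<noteq> {}"
  shows "\<exists>T. is_min_rcut_sink V E c r T"
proof -
  have "sink_sets V r \<noteq> {}"
    using assms(2) unfolding sink_sets_def by auto
  then have "min_rcut_value V E c r \<in> cut_cap E c ` sink_sets V r"
    unfolding min_rcut_value_def using assms(1) by (simp add: finite_sink_sets)
  then show ?thesis
    unfolding is_min_rcut_sink_def by auto
qed

lemma finite_min_sink_cards:
  "finite V \<Longrightarrow> finite {card T | T. is_min_rcut_sink V E c r T}"
  by (rule finite_subset[where B = "card ` sink_sets V r"])
    (auto simp: is_min_rcut_sink_def finite_sink_sets)

lemma min_sink_size_le:
  "finite V \<Longrightarrow> is_min_rcut_sink V E c r T \<Longrightarrow> min_sink_size V E c r \<le> card T"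
  unfolding min_sink_size_def by (rule Min_le) (auto simp: finite_min_sink_cards)

lemma min_sink_size_attained:
  assumes "finite V" and "V - {r} \<noteq> {}"
  shows "\<exists>T. is_min_rcut_sink V E c r T \<and> card T = min_sink_size V E c r"
proof -
  have "{card T | T. is_min_rcut_sink V E c r T} \<noteq> {}"
    using ex_min_rcut_sink[OF assms] by auto
  then have "min_sink_size V E c r \<in> {card T | T. is_min_rcut_sink V E c r T}"
    unfolding min_sink_size_def using assms(1) by (intro Min_in finite_min_sink_cards)
  then show ?thesis by auto
qed

lemma min_rcut_value_less_singleton:
  assumes "finite V" and "v \<in> V - {r}" and "min_sink_size V E c r \<noteq> 1"
  shows "min_rcut_value V E c r < cut_cap E c {v}"
proof -
  have v_sink: "{v} \<in> sink_sets V r"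
    using assms(2) unfolding sink_sets_def by auto
  have "\<not> is_min_rcut_sink V E c r {v}"
  proof
    assume "is_min_rcut_sink V E c r {v}"
    then have "min_sink_size V E c r \<le> 1"
      using min_sink_size_le[OF assms(1)] by fastforce
    moreover obtain T where "is_min_rcut_sink V E c r T" "card T = min_sink_size V E c r"
      using min_sink_size_attained[OF assms(1)] assms(2) by blast
    then have "0 < min_sink_size V E c r"
      using card_sink_pos[OF assms(1)] unfolding is_min_rcut_sink_def by fastforce
    ultimately show False
      using assms(3) by simp
  qed
  then show ?thesis
    using min_rcut_value_le[OF assms(1) v_sink] v_sink
    unfolding is_min_rcut_sink_def by (simp add: order_less_le)
qed

lemma less_mult_of_mult_Suc_le:
  fixes k l U :: nat
  assumes "0 < k" and "k * (l + 1) \<le> l + U * (k * (k - 1))"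
  shows "l < U * k"
proof (rule ccontr)
  assume "\<not> l < U * k"
  then have "(k - 1) * (U * k) \<le> (k - 1) * l"
    by simp
  then have "U * (k * (k - 1)) \<le> (k - 1) * l"
    by (simp add: ac_simps)
  moreover have "k * (l + 1) = (k - 1) * l + l + k"
    using assms(1) by (cases k) (simp_all add: algebra_simps)
  ultimately show False
    using assms by linarith
qed

theorem lemma2p2:
  fixes V :: "'a set" and E :: "('a \<times> 'a) set" and c :: "'a \<times> 'a \<Rightarrow> nat"
    and r :: 'a and U :: nat
  assumes "finite V"
    and "E \<subseteq> V \<times> V"
    and "r \<in> V"
    and "V - {r} \<noteq> {}"
    and "U \<ge> 1"
    and "\<And>e. e \<in> E \<Longrightarrow> 1 \<le> c e \<and> c e \<le> U"
  shows "min_sink_size V E c r = 1 \<or> min_rcut_value V E c r < U * min_sink_size V E c r"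
proof (cases "min_sink_size V E c r = 1")
  case k_ne_1: False
  define k where "k = min_sink_size V E c r"
  define lam where "lam = min_rcut_value V E c r"
  obtain T where T: "is_min_rcut_sink V E c r T" and card_T: "card T = k"
    using min_sink_size_attained[OF assms(1,4)] unfolding k_def by blast
  have T_sink: "T \<subseteq> V - {r}" and "finite T"
    using T assms(1) unfolding is_min_rcut_sink_def sink_sets_def by (auto intro: finite_subset)
  have "k * (lam + 1) = (\<Sum>v\<in>T. lam + 1)"
    by (simp add: card_T)
  also have "\<dots> \<le> (\<Sum>v\<in>T. cut_cap E c {v})"
    using min_rcut_value_less_singleton[OF assms(1) _ k_ne_1] T_sink
    by (intro sum_mono) (auto simp: lam_def Suc_le_eq)
  also have "\<dots> = lam + (\<Sum>e\<in>inner_edges E T. c e)"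
    using sum_cut_cap_singletons[OF finite_subset[OF assms(2)] \<open>finite T\<close>] assms(1) T
    by (simp add: lam_def is_min_rcut_sink_def)
  also have "\<dots> \<le> lam + U * (k * (k - 1))"
    using sum_inner_edges_le[OF \<open>finite T\<close>] assms(6) card_T by simp
  finally have "k * (lam + 1) \<le> lam + U * (k * (k - 1))" .
  moreover have "0 < k"
    using card_sink_pos[OF assms(1)] T card_T unfolding is_min_rcut_sink_def by blast
  ultimately have "lam < U * k"
    by (blast intro: less_mult_of_mult_Suc_le)
  then show ?thesis
    by (simp add: k_def lam_def)
qed simp

end
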